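(* Let $\mathcal P^*$ be any partition of $\mathcal M$ minimizing $\Delta$, and let $\lambda^*=\lambda^{(\mathcal P^* )}$. Then for any CR $\mathbf J$ obtained from an interactive communication $\mathbf F$, $$\lim_{n\to\infty}\frac1n\sum_{B\in\mathcal B}\lambda^*_B\,H(\mathbf J|X^n_{B^c},\mathbf F)=0.$$
   Context: Let $\mathcal M=\{1,\dots,m\}$, $m\ge2$, and let $X_{\mathcal M}=(X_1,\dots,X_m)$ be jointly distributed random variables on finite alphabets. $X^n_{\mathcal M}$ consists of $n$ i.i.d. copies of $X_{\mathcal M}$, and $X^n_A=(X^n_i:i\in A)$. An interactive communication $\mathbf F$ (depending on $n$) is a finite sequence of transmissions; each is sent by some terminal $i$ and is a deterministic function of $X^n_i$ and the previous transmissions. A common randomness (CR) obtained from $\mathbf F$ is a sequence $\mathbf J=\mathbf J^{(n)}$ of functions of $X^n_{\mathcal M}$ such that for every $0<\epsilon<1$ and all large $n$ there exist $J_i=J_i(X^n_i,\mathbf F)$, $i\in\mathcal M$, with $\Pr[J_1=\cdots=J_m=\mathbf J]\ge1-\epsilon$. For a partition $\mathcal P$ with $|\mathcal P|\ge2$, $\Delta(\mathcal P)=\frac{1}{|\mathcal P|-1}[\sum_{A\in\mathcal P}H(X_A)-H(X_{\mathcal M})]$. $\mathcal B$ is the set of nonempty proper subsets of $\mathcal M$, and $\lambda^{(\mathcal P)}_B=\mathbf 1\{B^c\in\mathcal P\}/(|\mathcal P|-1)$. *)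

theory Defs
  imports "HOL-Probability.Probability" "HOL-Library.Disjoint_Sets"
begin

definition ent :: "'b pmf \<Rightarrow> real" where
  "ent q = - (\<Sum>y\<in>set_pmf q. pmf q y * log 2 (pmf q y))"

definition H :: "'w pmf \<Rightarrow> ('w \<Rightarrow> 'b) \<Rightarrow> real" where
  "H Q f = ent (map_pmf f Q)"

definition Hc :: "'w pmf \<Rightarrow> ('w \<Rightarrow> 'b) \<Rightarrow> ('w \<Rightarrow> 'c) \<Rightarrow> real" where
  "Hc Q f g = H Q (\<lambda>w. (f w, g w)) - H Q g"

text \<open>Single-letter source: X_M is a random function on terminals; X_A its restriction to A.\<close>
definition XA :: "nat set \<Rightarrow> (nat \<Rightarrow> 'a) \<Rightarrow> (nat \<Rightarrow> 'a)" where
  "XA A x = (\<lambda>i. if i \<in> A then x i else undefined)"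

text \<open>n i.i.d. copies: a sample is w :: nat => (nat => 'a), w t i = i-th component of t-th copy.\<close>
definition iid :: "nat \<Rightarrow> (nat \<Rightarrow> 'a) pmf \<Rightarrow> (nat \<Rightarrow> nat \<Rightarrow> 'a) pmf" where
  "iid n p = Pi_pmf {..<n} undefined (\<lambda>_. p)"

definition XnA :: "nat \<Rightarrow> nat set \<Rightarrow> (nat \<Rightarrow> nat \<Rightarrow> 'a) \<Rightarrow> (nat \<Rightarrow> nat \<Rightarrow> 'a)" where
  "XnA n A w = (\<lambda>t i. if t < n \<and> i \<in> A then w t i else undefined)"

definition Xni :: "nat \<Rightarrow> nat \<Rightarrow> (nat \<Rightarrow> nat \<Rightarrow> 'a) \<Rightarrow> (nat \<Rightarrow> 'a)" where
  "Xni n i w = (\<lambda>t. if t < n then w t i else undefined)"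

text \<open>An interactive communication protocol: a finite list of transmissions, each given by
  the sending terminal and a deterministic function of that terminal's observation X^n_i and
  the previous transmissions. The transcript F is the list of all transmissions.\<close>
type_synonym ('a, 'c) protocol = "(nat \<times> ((nat \<Rightarrow> 'a) \<Rightarrow> 'c list \<Rightarrow> 'c)) list"

fun run :: "nat \<Rightarrow> ('a, 'c) protocol \<Rightarrow> (nat \<Rightarrow> nat \<Rightarrow> 'a) \<Rightarrow> 'c list \<Rightarrow> 'c list" where
  "run n [] w prev = prev"
| "run n ((i, f) # rest) w prev = run n rest w (prev @ [f (Xni n i w) prev])"

definition transcript :: "nat \<Rightarrow> ('a, 'c) protocol \<Rightarrow> (nat \<Rightarrow> nat \<Rightarrow> 'a) \<Rightarrow> 'c list" where
  "transcript n \<pi> w = run n \<pi> w []"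

definition valid_protocol :: "nat \<Rightarrow> ('a, 'c) protocol \<Rightarrow> bool" where
  "valid_protocol m \<pi> \<longleftrightarrow> (\<forall>(i, f) \<in> set \<pi>. i \<in> {1..m})"

definition is_CR :: "nat \<Rightarrow> (nat \<Rightarrow> 'a) pmf \<Rightarrow> (nat \<Rightarrow> ('a, 'c) protocol)
     \<Rightarrow> (nat \<Rightarrow> (nat \<Rightarrow> nat \<Rightarrow> 'a) \<Rightarrow> 'j) \<Rightarrow> bool" where
  "is_CR m p F J \<longleftrightarrow>
     (\<forall>\<epsilon>::real. 0 < \<epsilon> \<and> \<epsilon> < 1 \<longrightarrow>
       (\<exists>N. \<forall>n\<ge>N. \<exists>Ji :: nat \<Rightarrow> (nat \<Rightarrow> 'a) \<Rightarrow> 'c list \<Rightarrow> 'j.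
          measure_pmf.prob (iid n p)
            {w. \<forall>i\<in>{1..m}. Ji i (Xni n i w) (transcript n (F n) w) = J n w} \<ge> 1 - \<epsilon>))"

definition Delta :: "nat \<Rightarrow> (nat \<Rightarrow> 'a) pmf \<Rightarrow> nat set set \<Rightarrow> real" where
  "Delta m p P = ((\<Sum>A\<in>P. H p (XA A)) - H p (XA {1..m})) / (real (card P) - 1)"

definition lam :: "nat \<Rightarrow> nat set set \<Rightarrow> nat set \<Rightarrow> real" where
  "lam m P B = (if {1..m} - B \<in> P then 1 else 0) / (real (card P) - 1)"

end

theory Submission imports Defs begin

text \<open>Each conditional entropy in the sum grows sublinearly in n, so neither the weights \<lambda>*
  nor the minimality of P* matter. Since J is recoverable from (X^n_i, F) with error probability
  at most \<epsilon> for every terminal i, and B^c contains some terminal i, Fano's inequality bounds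
  H(J | X^n_{B^c}, F) by 1 + \<epsilon> log |range J|, and |range J| is at most the support size c^n
  of X^n_M.\<close>

lemma sum_set_pmf_map:
  fixes G :: "'b \<Rightarrow> real"
  assumes fin: "finite (set_pmf Q)"
  shows "(\<Sum>w\<in>set_pmf Q. pmf Q w * G (h w)) = (\<Sum>z\<in>h ` set_pmf Q. pmf (map_pmf h Q) z * G z)"
proof -
  have pmf_map_eq: "pmf (map_pmf h Q) z = (\<Sum>w\<in>{w\<in>set_pmf Q. h w = z}. pmf Q w)" for z
  proof -
    have "pmf (map_pmf h Q) z = measure Q (h -` {z} \<inter> set_pmf Q)"
      by (simp add: pmf_map measure_Int_set_pmf)
    also have "h -` {z} \<inter> set_pmf Q = {w\<in>set_pmf Q. h w = z}" by auto
    also have "measure Q \<dots> = (\<Sum>w\<in>{w\<in>set_pmf Q. h w = z}. pmf Q w)"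
      by (rule measure_measure_pmf_finite) (use fin in auto)
    finally show ?thesis .
  qed
  have "(\<Sum>w\<in>set_pmf Q. pmf Q w * G (h w)) =
     (\<Sum>z\<in>h ` set_pmf Q. \<Sum>w\<in>{w\<in>set_pmf Q. h w = z}. pmf Q w * G z)"
    by (subst sum.image_gen[OF fin]) (auto intro!: sum.cong)
  also have "\<dots> = (\<Sum>z\<in>h ` set_pmf Q. pmf (map_pmf h Q) z * G z)"
    by (simp add: pmf_map_eq sum_distrib_right)
  finally show ?thesis .
qed

lemma Hc_eq_sum_log_ratio:
  assumes fin: "finite (set_pmf Q)"
  shows "Hc Q f g = (\<Sum>w\<in>set_pmf Q. pmf Q w *
     log 2 (pmf (map_pmf g Q) (g w) / pmf (map_pmf (\<lambda>w. (f w, g w)) Q) (f w, g w)))"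
proof -
  have ent_map: "ent (map_pmf k Q) = - (\<Sum>w\<in>set_pmf Q. pmf Q w * log 2 (pmf (map_pmf k Q) (k w)))"
    for k :: "'a \<Rightarrow> 'e"
    unfolding ent_def using sum_set_pmf_map[OF fin, of "\<lambda>z. log 2 (pmf (map_pmf k Q) z)" k]
    by simp
  have "log 2 (pmf (map_pmf g Q) (g w)) - log 2 (pmf (map_pmf (\<lambda>w. (f w, g w)) Q) (f w, g w))
     = log 2 (pmf (map_pmf g Q) (g w) / pmf (map_pmf (\<lambda>w. (f w, g w)) Q) (f w, g w))"
    if "w \<in> set_pmf Q" for w
  proof -
    have "pmf (map_pmf g Q) (g w) > 0" "pmf (map_pmf (\<lambda>w. (f w, g w)) Q) (f w, g w) > 0"
      using that by (simp_all add: pmf_positive)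
    then show ?thesis by (simp add: log_divide)
  qed
  then show ?thesis
    unfolding Hc_def H_def ent_map
    by (auto simp: sum_subtractf[symmetric] right_diff_distrib[symmetric] intro!: sum.cong)
qed

lemma pmf_map_pair_le_pmf_map:
  "pmf (map_pmf (\<lambda>w. (f w, g w)) Q) (f w, g w) \<le> pmf (map_pmf g Q) (g w)"
  unfolding pmf_map by (rule measure_pmf.finite_measure_mono) auto

lemma Hc_nonneg:
  assumes "finite (set_pmf Q)"
  shows "Hc Q f g \<ge> 0"
  unfolding Hc_eq_sum_log_ratio[OF assms]
proof (rule sum_nonneg)
  fix w assume "w \<in> set_pmf Q"
  then have "pmf (map_pmf (\<lambda>w. (f w, g w)) Q) (f w, g w) > 0" by (simp add: pmf_positive)
  then have "1 \<le> pmf (map_pmf g Q) (g w) / pmf (map_pmf (\<lambda>w. (f w, g w)) Q) (f w, g w)"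
    using pmf_map_pair_le_pmf_map[of f g Q w] by simp
  then show "0 \<le> pmf Q w * log 2 (pmf (map_pmf g Q) (g w) / pmf (map_pmf (\<lambda>w. (f w, g w)) Q) (f w, g w))"
    by simp
qed

lemma log2_le_minus_one: "0 < (x::real) \<Longrightarrow> log 2 x \<le> (x - 1) / ln 2"
  unfolding log_def using ln_le_minus_one[of x] by (simp add: divide_right_mono)

lemma sum_kernel_likelihood_ratio_le_1:
  assumes fin: "finite (set_pmf Q)"
    and R_nonneg: "\<And>z. R z \<ge> 0"
    and R_sum: "\<And>y. (\<Sum>x\<in>f ` set_pmf Q. R (x, y)) \<le> 1"
  shows "(\<Sum>w\<in>set_pmf Q. pmf Q w * (R (f w, g w) * pmf (map_pmf g Q) (g w)
            / pmf (map_pmf (\<lambda>w. (f w, g w)) Q) (f w, g w))) \<le> 1"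
proof -
  define S where "S = set_pmf Q"
  define h where "h = (\<lambda>w. (f w, g w))"
  define Pfg where "Pfg = pmf (map_pmf h Q)"
  define Pg where "Pg = pmf (map_pmf g Q)"
  have finS: "finite S" using fin S_def by simp
  have "(\<Sum>w\<in>S. pmf Q w * (R (h w) * Pg (snd (h w)) / Pfg (h w))) =
        (\<Sum>z\<in>h ` S. Pfg z * (R z * Pg (snd z) / Pfg z))"
    using sum_set_pmf_map[OF fin, of "\<lambda>z. R z * Pg (snd z) / Pfg z" h] unfolding S_def Pfg_def by simp
  also have "\<dots> = (\<Sum>z\<in>h ` S. R z * Pg (snd z))"
  proof (rule sum.cong[OF refl])
    fix z assume "z \<in> h ` S"
    then have "Pfg z > 0" unfolding Pfg_def S_def by (auto simp: pmf_positive)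
    then show "Pfg z * (R z * Pg (snd z) / Pfg z) = R z * Pg (snd z)" by simp
  qed
  also have "\<dots> \<le> (\<Sum>z\<in>f ` S \<times> g ` S. R z * Pg (snd z))"
    using finS R_nonneg by (intro sum_mono2) (auto simp: h_def Pg_def)
  also have "\<dots> = (\<Sum>x\<in>f ` S. \<Sum>y\<in>g ` S. R (x, y) * Pg y)"
    by (simp add: sum.cartesian_product split_beta)
  also have "\<dots> = (\<Sum>y\<in>g ` S. (\<Sum>x\<in>f ` S. R (x, y)) * Pg y)"
    by (subst sum.swap) (simp add: sum_distrib_right)
  also have "\<dots> \<le> (\<Sum>y\<in>g ` S. 1 * Pg y)"
    using R_sum unfolding S_def Pg_def by (intro sum_mono mult_right_mono) auto
  also have "\<dots> = 1"
    using sum_pmf_eq_1[of "g ` S" "map_pmf g Q"] finS unfolding Pg_def S_def by simp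
  finally show ?thesis
    by (simp add: S_def h_def Pg_def Pfg_def)
qed

text \<open>Gibbs' inequality for a sub-stochastic kernel R(x | y) from the values of g to those of f.\<close>

lemma Hc_le_sum_log_inverse_kernel:
  assumes fin: "finite (set_pmf Q)"
    and R_pos: "\<And>z. R z > 0"
    and R_sum: "\<And>y. (\<Sum>x\<in>f ` set_pmf Q. R (x, y)) \<le> 1"
  shows "Hc Q f g \<le> (\<Sum>w\<in>set_pmf Q. pmf Q w * log 2 (1 / R (f w, g w)))"
proof -
  define S where "S = set_pmf Q"
  define \<rho> where "\<rho> w = R (f w, g w) * pmf (map_pmf g Q) (g w) / pmf (map_pmf (\<lambda>w. (f w, g w)) Q) (f w, g w)"
    for w
  have finS: "finite S" using fin S_def by simp
  have \<rho>_pos: "\<rho> w > 0" if "w \<in> S" for w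
    using that R_pos[of "(f w, g w)"] unfolding \<rho>_def S_def by (simp add: pmf_positive)
  have split: "Hc Q f g = (\<Sum>w\<in>S. pmf Q w * log 2 (1 / R (f w, g w))) + (\<Sum>w\<in>S. pmf Q w * log 2 (\<rho> w))"
    unfolding Hc_eq_sum_log_ratio[OF fin] sum.distrib[symmetric] S_def[symmetric]
  proof (rule sum.cong[OF refl])
    fix w assume w: "w \<in> S"
    have "pmf (map_pmf g Q) (g w) / pmf (map_pmf (\<lambda>w. (f w, g w)) Q) (f w, g w) = (1 / R (f w, g w)) * \<rho> w"
      using R_pos[of "(f w, g w)"] by (simp add: \<rho>_def)
    also have "log 2 \<dots> = log 2 (1 / R (f w, g w)) + log 2 (\<rho> w)"
      using R_pos[of "(f w, g w)"] \<rho>_pos[OF w] by (intro log_mult_pos) auto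
    finally show "pmf Q w * log 2 (pmf (map_pmf g Q) (g w) / pmf (map_pmf (\<lambda>w. (f w, g w)) Q) (f w, g w)) =
        pmf Q w * log 2 (1 / R (f w, g w)) + pmf Q w * log 2 (\<rho> w)"
      by (simp add: distrib_left)
  qed
  have "(\<Sum>w\<in>S. pmf Q w * log 2 (\<rho> w)) \<le> (\<Sum>w\<in>S. pmf Q w * ((\<rho> w - 1) / ln 2))"
    using \<rho>_pos log2_le_minus_one by (intro sum_mono mult_left_mono) auto
  also have "\<dots> = ((\<Sum>w\<in>S. pmf Q w * \<rho> w) - (\<Sum>w\<in>S. pmf Q w)) / ln 2"
    by (simp add: sum_subtractf[symmetric] sum_divide_distrib right_diff_distrib)
  also have "\<dots> \<le> 0"
    using sum_kernel_likelihood_ratio_le_1[OF fin _ R_sum] R_pos sum_pmf_eq_1[OF finS]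
    by (simp add: S_def \<rho>_def divide_nonpos_pos less_imp_le)
  finally show ?thesis
    using split by (simp add: S_def)
qed

text \<open>Fano's inequality, with the binary entropy of the error probability bounded by 1.\<close>

lemma Hc_le_Fano:
  assumes fin: "finite (set_pmf Q)"
  shows "Hc Q f g \<le> 1 + measure_pmf.prob Q {w. f w \<noteq> \<phi> (g w)} * log 2 (real (card (f ` set_pmf Q)))"
proof -
  define S where "S = set_pmf Q"
  define K where "K = real (card (f ` S))"
  define E where "E = {w. f w \<noteq> \<phi> (g w)}"
  have finS: "finite S" using fin S_def by simp
  have K1: "K \<ge> 1"
    unfolding K_def S_def using fin set_pmf_not_empty[of Q]
    by (simp add: Suc_leI card_gt_0_iff)
  \<comment> \<open>Mass 1/2 on the guess \<phi> y, spread the other half uniformly over the range of f.\<close>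
  define R where "R = (\<lambda>z::('b \<times> 'c). if fst z = \<phi> (snd z) then 1/2 else 1/(2*K))"
  have R_sum: "(\<Sum>x\<in>f ` S. R (x, y)) \<le> 1" for y
  proof -
    have "(\<Sum>x\<in>f ` S. R (x, y)) \<le> (\<Sum>x\<in>f ` S. (if x = \<phi> y then 1/2 else 0) + 1/(2*K))"
      using K1 by (intro sum_mono) (auto simp: R_def)
    also have "\<dots> = (if \<phi> y \<in> f ` S then 1/2 else 0) + K / (2*K)"
      using finS by (simp add: sum.distrib K_def)
    also have "\<dots> \<le> 1" using K1 by auto
    finally show ?thesis .
  qed
  have log_inv_R: "log 2 (1 / R (f w, g w)) = 1 + (if w \<in> E then log 2 K else 0)" for w
    using K1 by (auto simp: R_def E_def log_mult_pos)
  have "Hc Q f g \<le> (\<Sum>w\<in>S. pmf Q w * log 2 (1 / R (f w, g w)))"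
    unfolding S_def using K1
    by (intro Hc_le_sum_log_inverse_kernel[OF fin]) (use R_sum in \<open>auto simp: R_def S_def\<close>)
  also have "\<dots> = (\<Sum>w\<in>S. pmf Q w) + log 2 K * (\<Sum>w\<in>S. if w \<in> E then pmf Q w else 0)"
    unfolding log_inv_R sum_distrib_left sum.distrib[symmetric] by (rule sum.cong) (auto simp: algebra_simps)
  also have "(\<Sum>w\<in>S. if w \<in> E then pmf Q w else 0) = sum (pmf Q) (S \<inter> E)"
    using finS by (simp add: sum.inter_restrict)
  also have "sum (pmf Q) (S \<inter> E) = measure_pmf.prob Q E"
    using measure_measure_pmf_finite[of "S \<inter> E" Q] measure_Int_set_pmf[of Q E] finS
    unfolding S_def by (simp add: Int_commute)
  finally show ?thesis
    using sum_pmf_eq_1[OF finS] by (simp add: S_def K_def E_def mult.commute)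
qed

lemma LIMSEQ_div_n_zero_if_sublinear:
  fixes a :: "nat \<Rightarrow> real" and C :: real
  assumes nonneg: "\<And>n. a n \<ge> 0" and C: "C \<ge> 0"
    and bound: "\<And>\<epsilon>. 0 < \<epsilon> \<Longrightarrow> \<epsilon> < 1 \<Longrightarrow> \<exists>N. \<forall>n\<ge>N. a n \<le> 1 + \<epsilon> * real n * C"
  shows "(\<lambda>n. 1 / real n * a n) \<longlonglongrightarrow> 0"
proof (rule LIMSEQ_I)
  fix r :: real assume r: "0 < r"
  define \<epsilon> where "\<epsilon> = min (1/2) (r / (2*(C+1)))"
  have "0 < \<epsilon>" "\<epsilon> < 1" using r C by (auto simp: \<epsilon>_def)
  then obtain N where N: "\<forall>n\<ge>N. a n \<le> 1 + \<epsilon> * real n * C"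
    using bound by blast
  have "\<epsilon> * C \<le> r / (2*(C+1)) * C" using C by (intro mult_right_mono) (auto simp: \<epsilon>_def)
  also have "\<dots> = r/2 * (C/(C+1))" using C by (simp add: field_simps)
  also have "\<dots> \<le> r/2" using C r by (intro mult_left_le) auto
  finally have eC: "\<epsilon> * C \<le> r / 2" .
  show "\<exists>no. \<forall>n\<ge>no. norm (1 / real n * a n - 0) < r"
  proof (intro exI allI impI)
    fix n assume n: "n \<ge> max N (nat \<lceil>2/r\<rceil> + 1)"
    then have "real n \<ge> real (nat \<lceil>2/r\<rceil> + 1)" by linarith
    then have n_gt: "real n > 2 / r" by linarith
    then have n_pos: "real n > 0" using r by (smt (verit) divide_pos_pos)
    have inv: "1 / real n < r / 2" using n_gt n_pos r by (simp add: field_simps)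
    have "1 / real n * a n \<le> 1 / real n * (1 + \<epsilon> * real n * C)"
      using N n n_pos by (intro mult_left_mono) auto
    also have "\<dots> = 1 / real n + \<epsilon> * C" using n_pos by (simp add: field_simps)
    finally show "norm (1 / real n * a n - 0) < r" using inv eC nonneg[of n] n_pos by simp
  qed
qed

lemma finite_set_pmf_iid:
  "finite (set_pmf p) \<Longrightarrow> finite (set_pmf (iid n p))"
  unfolding iid_def by (simp add: set_Pi_pmf finite_PiE_dflt)

lemma card_set_pmf_iid:
  "finite (set_pmf p) \<Longrightarrow> card (set_pmf (iid n p)) = card (set_pmf p) ^ n"
  unfolding iid_def by (simp add: set_Pi_pmf card_PiE_dflt)

lemma CR_decoding_error_le:
  fixes F :: "nat \<Rightarrow> ('a, 'c) protocol" and J :: "nat \<Rightarrow> (nat \<Rightarrow> nat \<Rightarrow> 'a) \<Rightarrow> 'j"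
  assumes CR: "is_CR m p F J" and i: "i \<in> {1..m}" and \<epsilon>: "0 < \<epsilon>" "\<epsilon> < 1"
  shows "\<exists>N. \<forall>n\<ge>N. \<exists>\<psi>. measure_pmf.prob (iid n p)
      {w. J n w \<noteq> \<psi> (Xni n i w, transcript n (F n) w)} \<le> \<epsilon>"
proof -
  obtain N where N: "\<forall>n\<ge>N. \<exists>Ji :: nat \<Rightarrow> (nat \<Rightarrow> 'a) \<Rightarrow> 'c list \<Rightarrow> 'j.
      measure_pmf.prob (iid n p) {w. \<forall>i\<in>{1..m}. Ji i (Xni n i w) (transcript n (F n) w) = J n w} \<ge> 1 - \<epsilon>"
    using CR \<epsilon> unfolding is_CR_def by blast
  have "\<exists>\<psi>. measure_pmf.prob (iid n p) {w. J n w \<noteq> \<psi> (Xni n i w, transcript n (F n) w)} \<le> \<epsilon>"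
    if n: "n \<ge> N" for n
  proof -
    obtain Ji :: "nat \<Rightarrow> (nat \<Rightarrow> 'a) \<Rightarrow> 'c list \<Rightarrow> 'j" where
      Ji: "measure_pmf.prob (iid n p) {w. \<forall>i\<in>{1..m}. Ji i (Xni n i w) (transcript n (F n) w) = J n w} \<ge> 1 - \<epsilon>"
      using N n by blast
    define good where "good = {w. \<forall>i\<in>{1..m}. Ji i (Xni n i w) (transcript n (F n) w) = J n w}"
    have "measure_pmf.prob (iid n p) {w. J n w \<noteq> case_prod (Ji i) (Xni n i w, transcript n (F n) w)}
        \<le> measure_pmf.prob (iid n p) (UNIV - good)"
      using i by (intro measure_pmf.finite_measure_mono) (auto simp: good_def)
    also have "\<dots> = 1 - measure_pmf.prob (iid n p) good"
      using measure_pmf.prob_compl[of good "iid n p"] by simp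
    finally have "measure_pmf.prob (iid n p) {w. J n w \<noteq> case_prod (Ji i) (Xni n i w, transcript n (F n) w)} \<le> \<epsilon>"
      using Ji unfolding good_def by linarith
    then show ?thesis by blast
  qed
  then show ?thesis by blast
qed

lemma log_card_image_set_pmf_iid:
  assumes fin: "finite (set_pmf p)"
  shows "0 \<le> log 2 (card (f ` set_pmf (iid n p)))"
    and "log 2 (card (f ` set_pmf (iid n p))) \<le> real n * log 2 (card (set_pmf p))"
proof -
  have card_pos: "card (set_pmf p) \<ge> 1"
    using fin set_pmf_not_empty[of p] by (simp add: Suc_leI card_gt_0_iff)
  have K1: "real (card (f ` set_pmf (iid n p))) \<ge> 1"
    using finite_set_pmf_iid[OF fin, of n] set_pmf_not_empty[of "iid n p"]
    by (simp add: Suc_leI card_gt_0_iff)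
  then show "0 \<le> log 2 (card (f ` set_pmf (iid n p)))" by simp
  have "real (card (f ` set_pmf (iid n p))) \<le> real (card (set_pmf (iid n p)))"
    using card_image_le[OF finite_set_pmf_iid[OF fin]] of_nat_mono by blast
  also have "\<dots> = real (card (set_pmf p)) ^ n"
    by (simp add: card_set_pmf_iid[OF fin])
  finally have "log 2 (card (f ` set_pmf (iid n p))) \<le> log 2 (real (card (set_pmf p)) ^ n)"
    using K1 card_pos by (subst log_le_cancel_iff) auto
  also have "\<dots> = real n * log 2 (card (set_pmf p))"
    using card_pos by (simp add: log_nat_power)
  finally show "log 2 (card (f ` set_pmf (iid n p))) \<le> real n * log 2 (card (set_pmf p))" .
qed

lemma Hc_common_randomness_sublinear:
  fixes p :: "(nat \<Rightarrow> 'a) pmf"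
  assumes fin: "finite (set_pmf p)" and CR: "is_CR m p F J"
    and i: "i \<in> A" "i \<in> {1..m}"
  shows "(\<lambda>n. 1 / real n * Hc (iid n p) (J n) (\<lambda>w. (XnA n A w, transcript n (F n) w))) \<longlonglongrightarrow> 0"
proof (rule LIMSEQ_div_n_zero_if_sublinear[where C = "log 2 (card (set_pmf p))"])
  show "0 \<le> Hc (iid n p) (J n) (\<lambda>w. (XnA n A w, transcript n (F n) w))" for n
    by (rule Hc_nonneg[OF finite_set_pmf_iid[OF fin]])
  show "0 \<le> log 2 (card (set_pmf p))"
    using log_card_image_set_pmf_iid[OF fin, of id 1] by simp
  fix \<epsilon> :: real assume \<epsilon>: "0 < \<epsilon>" "\<epsilon> < 1"
  obtain N where N: "\<forall>n\<ge>N. \<exists>\<psi>. measure_pmf.prob (iid n p)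
      {w. J n w \<noteq> \<psi> (Xni n i w, transcript n (F n) w)} \<le> \<epsilon>"
    using CR_decoding_error_le[OF CR i(2) \<epsilon>] by blast
  show "\<exists>N. \<forall>n\<ge>N. Hc (iid n p) (J n) (\<lambda>w. (XnA n A w, transcript n (F n) w))
      \<le> 1 + \<epsilon> * real n * log 2 (card (set_pmf p))"
  proof (intro exI allI impI)
    fix n assume "N \<le> n"
    then obtain \<psi> where \<psi>: "measure_pmf.prob (iid n p)
        {w. J n w \<noteq> \<psi> (Xni n i w, transcript n (F n) w)} \<le> \<epsilon>"
      using N by blast
    \<comment> \<open>X^n_i is a function of X^n_A because i \<in> A.\<close>
    define \<phi> where "\<phi> = (\<lambda>(a :: nat \<Rightarrow> nat \<Rightarrow> 'a, tr). \<psi> (\<lambda>t. if t < n then a t i else undefined, tr))"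
    have \<phi>: "\<phi> (XnA n A w, transcript n (F n) w) = \<psi> (Xni n i w, transcript n (F n) w)" for w
    proof -
      have "(\<lambda>t. if t < n then XnA n A w t i else undefined) = Xni n i w"
        using i(1) by (simp add: XnA_def Xni_def fun_eq_iff)
      then show ?thesis by (simp add: \<phi>_def)
    qed
    have "Hc (iid n p) (J n) (\<lambda>w. (XnA n A w, transcript n (F n) w))
        \<le> 1 + measure_pmf.prob (iid n p) {w. J n w \<noteq> \<phi> (XnA n A w, transcript n (F n) w)}
              * log 2 (card (J n ` set_pmf (iid n p)))"
      by (rule Hc_le_Fano[OF finite_set_pmf_iid[OF fin],
            where g = "\<lambda>w. (XnA n A w, transcript n (F n) w)" and \<phi> = \<phi>])
    also have "\<dots> \<le> 1 + \<epsilon> * (real n * log 2 (card (set_pmf p)))"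
      using \<psi> \<epsilon> log_card_image_set_pmf_iid[OF fin, of "J n" n] unfolding \<phi>
      by (intro add_left_mono mult_mono) simp_all
    finally show "Hc (iid n p) (J n) (\<lambda>w. (XnA n A w, transcript n (F n) w))
        \<le> 1 + \<epsilon> * real n * log 2 (card (set_pmf p))"
      by (simp add: mult.assoc)
  qed
qed

theorem lemma2:
  fixes m :: nat
    and p :: "(nat \<Rightarrow> 'a::finite) pmf"
    and Pstar :: "nat set set"
    and F :: "nat \<Rightarrow> ('a, 'c) protocol"
    and J :: "nat \<Rightarrow> (nat \<Rightarrow> nat \<Rightarrow> 'a) \<Rightarrow> 'j"
  assumes m2: "m \<ge> 2"
    and supp: "\<forall>x\<in>set_pmf p. \<forall>i. i \<notin> {1..m} \<longrightarrow> x i = undefined"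
    and Ppart: "partition_on {1..m} Pstar" and Pcard: "card Pstar \<ge> 2"
    and Pmin: "\<forall>Q. partition_on {1..m} Q \<and> card Q \<ge> 2 \<longrightarrow> Delta m p Pstar \<le> Delta m p Q"
    and Fvalid: "\<forall>n. valid_protocol m (F n)"
    and CR: "is_CR m p F J"
  shows "(\<lambda>n. (1 / real n) *
            (\<Sum>B\<in>{B. B \<subseteq> {1..m} \<and> B \<noteq> {} \<and> B \<noteq> {1..m}}.
               lam m Pstar B *
               Hc (iid n p) (J n) (\<lambda>w. (XnA n ({1..m} - B) w, transcript n (F n) w))))
         \<longlonglongrightarrow> 0"
proof -
  have "set_pmf p \<subseteq> PiE {1..m} (\<lambda>_. UNIV :: 'a set)"
    using supp by (auto simp: PiE_def extensional_def)
  then have fin: "finite (set_pmf p)"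
    by (rule finite_subset) (intro finite_PiE; simp)
  have "(\<lambda>n. \<Sum>B\<in>{B. B \<subseteq> {1..m} \<and> B \<noteq> {} \<and> B \<noteq> {1..m}}. lam m Pstar B *
      (1 / real n * Hc (iid n p) (J n) (\<lambda>w. (XnA n ({1..m} - B) w, transcript n (F n) w)))) \<longlonglongrightarrow> 0"
  proof (intro tendsto_null_sum tendsto_mult_right_zero)
    fix B assume "B \<in> {B. B \<subseteq> {1..m} \<and> B \<noteq> {} \<and> B \<noteq> {1..m}}"
    then have "{1..m} - B \<noteq> {}" by auto
    then obtain i where "i \<in> {1..m} - B" "i \<in> {1..m}" by blast
    then show "(\<lambda>n. 1 / real n * Hc (iid n p) (J n) (\<lambda>w. (XnA n ({1..m} - B) w, transcript n (F n) w)))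
        \<longlonglongrightarrow> 0"
      by (rule Hc_common_randomness_sublinear[OF fin CR])
  qed
  then show ?thesis
    by (simp only: sum_distrib_left mult.left_commute)
qed

end
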